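(* Let $A=[a_{ij}]\in\mathfrak{B}_{n\times m}$ be a semi-canonical matrix. Then there exist integers $i,j$ with $0\le i\le n$ and $0\le j\le m$ such that $a_{11}=a_{12}=\cdots=a_{1j}=0$ and $a_{1,j+1}=a_{1,j+2}=\cdots=a_{1m}=1$, and $a_{11}=a_{21}=\cdots=a_{i1}=0$ and $a_{i+1,1}=a_{i+2,1}=\cdots=a_{n1}=1$.
   Context: $\mathfrak{B}_{n\times m}$ denotes the set of all $n\times m$ matrices with entries in $\{0,1\}$. For $A=[a_{ij}]\in\mathfrak{B}_{n\times m}$, $r(A)=\langle x_1,\dots,x_n\rangle$ with $x_i=\sum_{j=1}^m a_{ij}2^{m-j}$ and $c(A)=\langle y_1,\dots,y_m\rangle$ with $y_j=\sum_{i=1}^n a_{ij}2^{n-i}$. $A$ is semi-canonical if $x_1\le x_2\le\cdots\le x_n$ and $y_1\le y_2\le\cdots\le y_m$. *)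

theory Defs
  imports Main
begin

text \<open>An n x m (0,1)-matrix is represented by a function A :: nat => nat => nat
  with 1-based indices; only entries A i j with 1 <= i <= n, 1 <= j <= m matter.\<close>

definition is_binary_matrix :: "nat \<Rightarrow> nat \<Rightarrow> (nat \<Rightarrow> nat \<Rightarrow> nat) \<Rightarrow> bool" where
  "is_binary_matrix n m A \<longleftrightarrow> (\<forall>i\<in>{1..n}. \<forall>j\<in>{1..m}. A i j \<in> {0, 1})"

definition row_val :: "nat \<Rightarrow> (nat \<Rightarrow> nat \<Rightarrow> nat) \<Rightarrow> nat \<Rightarrow> nat" where
  "row_val m A i = (\<Sum>j=1..m. A i j * 2 ^ (m - j))"

definition col_val :: "nat \<Rightarrow> (nat \<Rightarrow> nat \<Rightarrow> nat) \<Rightarrow> nat \<Rightarrow> nat" where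
  "col_val n A j = (\<Sum>i=1..n. A i j * 2 ^ (n - i))"

definition semi_canonical :: "nat \<Rightarrow> nat \<Rightarrow> (nat \<Rightarrow> nat \<Rightarrow> nat) \<Rightarrow> bool" where
  "semi_canonical n m A \<longleftrightarrow> is_binary_matrix n m A
     \<and> (\<forall>i\<in>{1..n}. \<forall>i'\<in>{1..n}. i \<le> i' \<longrightarrow> row_val m A i \<le> row_val m A i')
     \<and> (\<forall>j\<in>{1..m}. \<forall>j'\<in>{1..m}. j \<le> j' \<longrightarrow> col_val n A j \<le> col_val n A j')"

end

theory Submission
  imports Defs
begin

text \<open>The entries of the first row (column) of A are the leading binary digits of
  the column (row) values, and a leading digit is 1 exactly when the value is at least the
  corresponding power of 2. So monotone column values force the first row to be monotone,
  i.e. a block of zeros followed by a block of ones; likewise for the first column.\<close>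

lemma binary_sum_Suc:
  "(\<Sum>i=1..Suc n. f i * (2::nat) ^ (Suc n - i))
     = f 1 * 2 ^ n + (\<Sum>i=1..n. f (Suc i) * 2 ^ (n - i))"
proof -
  have "(\<Sum>i=1..Suc n. f i * (2::nat) ^ (Suc n - i))
      = f 1 * 2 ^ n + (\<Sum>i=Suc 1..Suc n. f i * 2 ^ (Suc n - i))"
    by (simp add: sum.atLeast_Suc_atMost)
  also have "(\<Sum>i=Suc 1..Suc n. f i * (2::nat) ^ (Suc n - i))
      = (\<Sum>i=1..n. f (Suc i) * 2 ^ (Suc n - Suc i))"
    by (rule sum.shift_bounds_cl_Suc_ivl)
  finally show ?thesis by simp
qed

lemma binary_sum_less_power:
  assumes "\<forall>i\<in>{1..n}. f i \<le> 1"
  shows "(\<Sum>i=1..n. f i * (2::nat) ^ (n - i)) < 2 ^ n"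
  using assms
proof (induction n arbitrary: f)
  case 0
  then show ?case by simp
next
  case (Suc n)
  have "(\<Sum>i=1..n. f (Suc i) * (2::nat) ^ (n - i)) < 2 ^ n"
    using Suc.prems by (intro Suc.IH) auto
  moreover have "f 1 * (2::nat) ^ n \<le> 2 ^ n"
    using Suc.prems by auto
  ultimately show ?case
    unfolding binary_sum_Suc power_Suc by linarith
qed

lemma binary_sum_ge_iff_leading_digit:
  assumes "\<forall>i\<in>{1..n}. f i \<in> {0, 1}" and "n \<ge> 1"
  shows "(\<Sum>i=1..n. f i * (2::nat) ^ (n - i)) \<ge> 2 ^ (n - 1) \<longleftrightarrow> f 1 = 1"
proof -
  obtain n' where n: "n = Suc n'"
    using \<open>n \<ge> 1\<close> by (cases n) auto
  have "(\<Sum>i=1..n'. f (Suc i) * (2::nat) ^ (n' - i)) < 2 ^ n'"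
    using assms(1) unfolding n by (intro binary_sum_less_power) force
  moreover have "f 1 = 0 \<or> f 1 = 1"
    using assms n by auto
  ultimately show ?thesis
    unfolding n binary_sum_Suc by auto
qed

lemma zero_one_upward_closed_threshold:
  fixes g :: "nat \<Rightarrow> nat"
  assumes binary: "\<forall>k\<in>{1..m}. g k \<in> {0, 1}"
    and upward_closed: "\<forall>k\<in>{1..m}. \<forall>k'\<in>{1..m}. k \<le> k' \<longrightarrow> g k = 1 \<longrightarrow> g k' = 1"
  shows "\<exists>j\<le>m. (\<forall>k\<in>{1..j}. g k = 0) \<and> (\<forall>k\<in>{j+1..m}. g k = 1)"
proof (cases "\<exists>k\<in>{1..m}. g k = 1")
  case False
  then show ?thesis
    using binary by (intro exI[of _ m]) auto
next
  case True
  define l where "l = (LEAST k. k \<in> {1..m} \<and> g k = 1)"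
  have l: "l \<in> {1..m}" "g l = 1"
    using LeastI_ex[OF True[unfolded Bex_def]] unfolding l_def by auto
  have "g k = 0" if "k \<in> {1..l - 1}" for k
  proof -
    have "g k \<noteq> 1"
      using not_less_Least[of k "\<lambda>k. k \<in> {1..m} \<and> g k = 1"] that l(1)
      unfolding l_def[symmetric] by fastforce
    then show ?thesis
      using binary that l(1) by auto
  qed
  moreover have "g k = 1" if "k \<in> {l - 1 + 1..m}" for k
  proof -
    have "l \<le> k" "k \<in> {1..m}"
      using that l(1) by auto
    then show ?thesis
      using upward_closed l by blast
  qed
  ultimately show ?thesis
    using l(1) by (intro exI[of _ "l - 1"]) auto
qed

lemma leading_digits_threshold_of_mono:
  fixes d :: "nat \<Rightarrow> nat \<Rightarrow> nat"
  assumes "L \<ge> 1"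
    and binary: "\<forall>k\<in>{1..N}. \<forall>i\<in>{1..L}. d k i \<in> {0, 1}"
    and mono: "\<forall>k\<in>{1..N}. \<forall>k'\<in>{1..N}. k \<le> k' \<longrightarrow>
        (\<Sum>i=1..L. d k i * 2 ^ (L - i)) \<le> (\<Sum>i=1..L. d k' i * 2 ^ (L - i))"
  shows "\<exists>j\<le>N. (\<forall>k\<in>{1..j}. d k 1 = 0) \<and> (\<forall>k\<in>{j+1..N}. d k 1 = 1)"
proof (rule zero_one_upward_closed_threshold)
  have leading: "(\<Sum>i=1..L. d k i * 2 ^ (L - i)) \<ge> 2 ^ (L - 1) \<longleftrightarrow> d k 1 = 1"
    if "k \<in> {1..N}" for k
    using binary that \<open>L \<ge> 1\<close> by (intro binary_sum_ge_iff_leading_digit) auto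
  show "\<forall>k\<in>{1..N}. d k 1 \<in> {0, 1}"
    using binary \<open>L \<ge> 1\<close> by auto
  show "\<forall>k\<in>{1..N}. \<forall>k'\<in>{1..N}. k \<le> k' \<longrightarrow> d k 1 = 1 \<longrightarrow> d k' 1 = 1"
    using leading mono by (meson order_trans)
qed

theorem proposition3:
  fixes n m :: nat and A :: "nat \<Rightarrow> nat \<Rightarrow> nat"
  assumes "n \<ge> 1" and "m \<ge> 1"
    and "semi_canonical n m A"
  shows "\<exists>i j. i \<le> n \<and> j \<le> m
     \<and> (\<forall>k\<in>{1..j}. A 1 k = 0) \<and> (\<forall>k\<in>{j+1..m}. A 1 k = 1)
     \<and> (\<forall>k\<in>{1..i}. A k 1 = 0) \<and> (\<forall>k\<in>{i+1..n}. A k 1 = 1)"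
proof -
  have binary: "\<forall>i\<in>{1..n}. \<forall>j\<in>{1..m}. A i j \<in> {0, 1}"
    and rows: "\<forall>i\<in>{1..n}. \<forall>i'\<in>{1..n}. i \<le> i' \<longrightarrow> row_val m A i \<le> row_val m A i'"
    and cols: "\<forall>j\<in>{1..m}. \<forall>j'\<in>{1..m}. j \<le> j' \<longrightarrow> col_val n A j \<le> col_val n A j'"
    using assms(3) unfolding semi_canonical_def is_binary_matrix_def by blast+
  have "\<exists>j\<le>m. (\<forall>k\<in>{1..j}. A 1 k = 0) \<and> (\<forall>k\<in>{j+1..m}. A 1 k = 1)"
    using leading_digits_threshold_of_mono[of n m "\<lambda>k i. A i k"] assms(1) binary cols
    unfolding col_val_def by blast
  moreover have "\<exists>i\<le>n. (\<forall>k\<in>{1..i}. A k 1 = 0) \<and> (\<forall>k\<in>{i+1..n}. A k 1 = 1)"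
    using leading_digits_threshold_of_mono[of m n A] assms(2) binary rows
    unfolding row_val_def by blast
  ultimately show ?thesis by blast
qed

end
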